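(* Let $\mathcal{Y}$ be a finite set and let $\mathcal{P}$ be a finitely generated credal set of probability measures on $\mathcal{Y}$ with set of extreme points $\mathrm{ex}\,\mathcal{P}=\{P^{\text{ex}}_s\}_{s=1}^S$. Let $\Delta^{S-1}=\{\beta=(\beta_1,\ldots,\beta_S)^\top:\beta_s\ge0\ \forall s,\ \sum_s\beta_s=1\}$, $\underline{H}(P^{\text{ex}})=\min_{P^{\text{ex}}\in\mathrm{ex}\,\mathcal{P}}H(P^{\text{ex}})$, $\overline{H}(P^{\text{ex}})=\max_{P^{\text{ex}}\in\mathrm{ex}\,\mathcal{P}}H(P^{\text{ex}})$, and $$l[\mathrm{TU}(\mathcal{P})]=\max\Big\{\sup_{\beta\in\Delta^{S-1}}\sum_{s=1}^S\beta_sH(P^{\text{ex}}_s),\ \overline{H}(P^{\text{ex}})\Big\}.$$ Let $\mathrm{TU}(\mathcal{P})=\sup_{P\in\mathcal{P}}H(P)$, $\mathrm{AU}(\mathcal{P})=\inf_{P\in\mathcal{P}}H(P)$ and $\mathrm{EU}(\mathcal{P})=\mathrm{TU}(\mathcal{P})-\mathrm{AU}(\mathcal{P})$. Then $$\mathrm{TU}(\mathcal{P})\in\Big[l[\mathrm{TU}(\mathcal{P})],\ \sup_{\beta\in\Delta^{S-1}}\sum_{s=1}^S\beta_sH(P^{\text{ex}}_s)+\log_2(S)\Big],\qquad \mathrm{AU}(\mathcal{P})=\underline{H}(P^{\text{ex}}),$$ $$\mathrm{EU}(\mathcal{P})\in\Big[\max\{0,\ l[\mathrm{TU}(\mathcal{P})]-\underline{H}(P^{\text{ex}})\},\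 \sup_{\beta\in\Delta^{S-1}}\sum_{s=1}^S\beta_sH(P^{\text{ex}}_s)+\log_2(S)-\underline{H}(P^{\text{ex}})\Big].$$
   Context: A credal set is a closed convex set of probability measures; it is finitely generated if it has finitely many extreme points (elements not expressible as convex combinations of the others). For a probability measure $P$ on finite $\mathcal{Y}$, $H(P)=-\sum_{y\in\mathcal{Y}}P(\{y\})\log_2P(\{y\})$ is the Shannon entropy. *)

theory Defs
  imports "HOL-Analysis.Analysis"
begin

text \<open>A probability measure on the finite set 'y is represented by its probability
  mass vector p :: real^'y (p$y = P({y})).\<close>

definition prob_vec :: "real^'y::finite \<Rightarrow> bool" where
  "prob_vec p \<longleftrightarrow> (\<forall>y. p $ y \<ge> 0) \<and> (\<Sum>y\<in>UNIV. p $ y) = 1"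

text \<open>Shannon entropy in bits (0 log 0 = 0; note log 2 0 = 0 in Isabelle).\<close>
definition entropy :: "real^'y::finite \<Rightarrow> real" where
  "entropy p = - (\<Sum>y\<in>UNIV. p $ y * log 2 (p $ y))"

definition credal_set :: "(real^'y::finite) set \<Rightarrow> bool" where
  "credal_set P \<longleftrightarrow> P \<noteq> {} \<and> closed P \<and> convex P \<and> (\<forall>p\<in>P. prob_vec p)"

definition finitely_generated :: "(real^'y::finite) set \<Rightarrow> bool" where
  "finitely_generated P \<longleftrightarrow> finite {x. x extreme_point_of P}"

definition prob_simplex :: "nat \<Rightarrow> (nat \<Rightarrow> real) set" where
  "prob_simplex S = {\<beta>. (\<forall>s\<in>{1..S}. \<beta> s \<ge> 0) \<and> (\<Sum>s=1..S. \<beta> s) = 1}"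

end

theory Submission
  imports Defs
begin

text \<open>Entropy is concave, and a compact credal set is the convex hull of its finitely many
  extreme points (Krein--Milman), so the infimum of the entropy over \<open>\<P>\<close> is attained at an
  extreme point. Conversely, the entropy of a mixture \<open>\<Sum>\<^sub>s \<beta>\<^sub>s P\<^sub>s\<close> exceeds the
  average \<open>\<Sum>\<^sub>s \<beta>\<^sub>s H(P\<^sub>s)\<close> by at most the entropy of the weights, which is at most
  \<open>log\<^sub>2 S\<close>. Finally, a linear function on the simplex attains its supremum at a vertex,
  so the supremum over \<open>\<Delta>\<^sup>S\<^sup>-\<^sup>1\<close> equals the maximal entropy of an extreme point.\<close>

lemma convex_on_mult_log:
  fixes b :: real
  assumes "b > 1"
  shows "convex_on {0..} (\<lambda>x. x * log b x)"
proof (rule convex_on_linorderI)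
  have pos: "convex_on {0<..} (\<lambda>x. x * log b x)"
  proof (rule f''_ge0_imp_convex)
    show "((\<lambda>x. x * log b x) has_real_derivative log b x + 1 / ln b) (at x)" if "x \<in> {0<..}" for x
      using assms that by (auto intro!: derivative_eq_intros simp: field_simps)
    show "((\<lambda>x. log b x + 1 / ln b) has_real_derivative 1 / (x * ln b)) (at x)" if "x \<in> {0<..}" for x
      using assms that by (auto intro!: derivative_eq_intros)
    show "0 \<le> 1 / (x * ln b)" if "x \<in> {0<..}" for x
      using assms that by simp
  qed simp
  fix t x y :: real
  assume t: "0 < t" "t < 1" and xy: "x \<in> {0..}" "y \<in> {0..}" "x < y"
  show "((1 - t) *\<^sub>R x + t *\<^sub>R y) * log b ((1 - t) *\<^sub>R x + t *\<^sub>R y)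
        \<le> (1 - t) * (x * log b x) + t * (y * log b y)"
  proof (cases "x = 0")
    case True
    have "log b (t * y) \<le> log b y"
      using assms t xy True by (simp add: mult_le_cancel_right1)
    then show ?thesis
      using True t xy by (simp add: mult_left_mono)
  next
    case False
    then show ?thesis using convex_onD[OF pos, of t x y] t xy by simp
  qed
qed simp

lemma sum_mult_log_le:
  fixes a :: "'i \<Rightarrow> real" and b :: real
  assumes "b > 1" and "finite I" and "\<And>i. i \<in> I \<Longrightarrow> a i \<ge> 0"
  shows "(\<Sum>i\<in>I. a i * log b (a i)) \<le> sum a I * log b (sum a I)"
proof -
  have "a i * log b (a i) \<le> a i * log b (sum a I)" if "i \<in> I" for i
  proof (cases "a i = 0")
    case False
    have "a i \<le> sum a I" using assms that by (intro member_le_sum) auto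
    moreover have "a i > 0" using assms(3)[OF that] False by simp
    ultimately show ?thesis using assms that by (intro mult_left_mono log_mono) auto
  qed simp
  then have "(\<Sum>i\<in>I. a i * log b (a i)) \<le> (\<Sum>i\<in>I. a i * log b (sum a I))"
    by (rule sum_mono)
  then show ?thesis by (simp add: sum_distrib_right)
qed

lemma mult_log_mult:
  fixes x y b :: real
  assumes "x \<ge> 0" and "y \<ge> 0"
  shows "(x * y) * log b (x * y) = y * (x * log b x) + x * (y * log b y)"
  using assms by (cases "x = 0 \<or> y = 0") (auto simp: log_mult algebra_simps)

lemma neg_sum_mult_log_le_log_card:
  fixes \<beta> :: "'i \<Rightarrow> real" and b :: real
  assumes "b > 1" and "finite I" and "\<And>i. i \<in> I \<Longrightarrow> \<beta> i \<ge> 0" and "sum \<beta> I = 1"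
  shows "- (\<Sum>i\<in>I. \<beta> i * log b (\<beta> i)) \<le> log b (card I)"
proof -
  \<comment> \<open>Jensen for \<open>x log x\<close> at the points \<open>\<beta> i\<close> with uniform weights \<open>1 / n\<close>\<close>
  define n where "n = real (card I)"
  have "I \<noteq> {}" using assms by auto
  then have n: "n > 0" using assms by (simp add: n_def card_gt_0_iff)
  have "(\<Sum>i\<in>I. (1 / n) *\<^sub>R \<beta> i) * log b (\<Sum>i\<in>I. (1 / n) *\<^sub>R \<beta> i)
        \<le> (\<Sum>i\<in>I. (1 / n) * (\<beta> i * log b (\<beta> i)))"
    using assms \<open>I \<noteq> {}\<close> n
    by (intro convex_on_sum[OF _ _ convex_on_mult_log]) (auto simp: n_def)
  moreover have "(\<Sum>i\<in>I. (1 / n) *\<^sub>R \<beta> i) = 1 / n"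
    using assms by (simp add: sum_divide_distrib[symmetric])
  ultimately have "(1 / n) * log b (1 / n) \<le> (1 / n) * (\<Sum>i\<in>I. \<beta> i * log b (\<beta> i))"
    by (simp add: sum_distrib_left)
  then have "- log b n / n \<le> (\<Sum>i\<in>I. \<beta> i * log b (\<beta> i)) / n"
    using n by (simp add: log_divide)
  then show ?thesis
    using n by (simp add: n_def divide_le_cancel flip: divide_minus_left)
qed

lemma concave_on_entropy: "concave_on {p :: real^'y::finite. \<forall>y. 0 \<le> p $ y} entropy"
  unfolding concave_on_iff
proof (intro conjI ballI allI impI)
  show "convex {p :: real^'y. \<forall>y. 0 \<le> p $ y}"
    by (auto simp: convex_def)
  have f: "convex_on {0..} (\<lambda>x::real. x * log 2 x)"
    by (rule convex_on_mult_log) simp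
  fix p q :: "real^'y" and u v :: real
  assume "p \<in> {p. \<forall>y. 0 \<le> p $ y}" "q \<in> {p. \<forall>y. 0 \<le> p $ y}" "0 \<le> u" "0 \<le> v" "u + v = 1"
  then have "(u * p $ y + v * q $ y) * log 2 (u * p $ y + v * q $ y)
             \<le> u * (p $ y * log 2 (p $ y)) + v * (q $ y * log 2 (q $ y))" for y
    using f by (auto simp: convex_on_def)
  then have "(\<Sum>y\<in>UNIV. (u * p $ y + v * q $ y) * log 2 (u * p $ y + v * q $ y))
             \<le> u * (\<Sum>y\<in>UNIV. p $ y * log 2 (p $ y)) + v * (\<Sum>y\<in>UNIV. q $ y * log 2 (q $ y))"
    by (simp add: sum_mono sum_distrib_left flip: sum.distrib)
  then show "u * entropy p + v * entropy q \<le> entropy (u *\<^sub>R p + v *\<^sub>R q)"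
    by (simp add: entropy_def)
qed

lemma entropy_mixture_le:
  fixes q :: "'i \<Rightarrow> real^'y::finite" and \<beta> :: "'i \<Rightarrow> real"
  assumes "finite I" and q: "\<And>i. i \<in> I \<Longrightarrow> prob_vec (q i)" and \<beta>: "\<And>i. i \<in> I \<Longrightarrow> \<beta> i \<ge> 0"
  shows "entropy (\<Sum>i\<in>I. \<beta> i *\<^sub>R q i)
         \<le> (\<Sum>i\<in>I. \<beta> i * entropy (q i)) - (\<Sum>i\<in>I. \<beta> i * log 2 (\<beta> i))"
proof -
  have q0: "q i $ y \<ge> 0" and q1: "(\<Sum>y\<in>UNIV. q i $ y) = 1" if "i \<in> I" for i y
    using q[OF that] by (auto simp: prob_vec_def)
  have "(\<Sum>i\<in>I. \<beta> i * log 2 (\<beta> i)) - (\<Sum>i\<in>I. \<beta> i * entropy (q i))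
      = (\<Sum>i\<in>I. \<Sum>y\<in>UNIV. q i $ y * (\<beta> i * log 2 (\<beta> i)) + \<beta> i * (q i $ y * log 2 (q i $ y)))"
    using q1 by (simp add: entropy_def sum.distrib sum_distrib_left sum_negf flip: sum_distrib_right)
  also have "\<dots> = (\<Sum>y\<in>UNIV. \<Sum>i\<in>I. (\<beta> i * q i $ y) * log 2 (\<beta> i * q i $ y))"
    using q0 \<beta> by (subst sum.swap) (simp add: mult_log_mult)
  also have "\<dots> \<le> (\<Sum>y\<in>UNIV. (\<Sum>i\<in>I. \<beta> i * q i $ y) * log 2 (\<Sum>i\<in>I. \<beta> i * q i $ y))"
    using \<open>finite I\<close> q0 \<beta> by (intro sum_mono sum_mult_log_le) auto
  finally show ?thesis
    by (simp add: entropy_def)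
qed

lemma entropy_mixture_le_log_card:
  fixes q :: "'i \<Rightarrow> real^'y::finite" and \<beta> :: "'i \<Rightarrow> real"
  assumes "finite I" and "\<And>i. i \<in> I \<Longrightarrow> prob_vec (q i)"
    and "\<And>i. i \<in> I \<Longrightarrow> \<beta> i \<ge> 0" and "sum \<beta> I = 1"
  shows "entropy (\<Sum>i\<in>I. \<beta> i *\<^sub>R q i) \<le> (\<Sum>i\<in>I. \<beta> i * entropy (q i)) + log 2 (card I)"
  using entropy_mixture_le[of I q \<beta>] neg_sum_mult_log_le_log_card[of 2 I \<beta>] assms by simp

lemma entropy_convex_hull_ge_Min:
  fixes E :: "(real^'y::finite) set"
  assumes "finite E" and "\<forall>q\<in>E. prob_vec q" and "p \<in> convex hull E"
  shows "Min (entropy ` E) \<le> entropy p"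
proof -
  let ?orthant = "{p :: real^'y. \<forall>y. 0 \<le> p $ y}"
  have "convex hull E \<subseteq> ?orthant"
    using assms(2) concave_on_imp_convex[OF concave_on_entropy]
    by (intro hull_minimal) (auto simp: prob_vec_def)
  then have "convex_on (convex hull E) (\<lambda>p. - entropy p)"
    by (rule convex_on_subset[OF concave_on_entropy[unfolded concave_on_def] _ convex_convex_hull])
  then have "\<forall>x\<in>convex hull E. - entropy x \<le> - Min (entropy ` E)"
    by (rule convex_on_convex_hull_bound) (simp add: assms(1))
  then show ?thesis
    using assms(3) by simp
qed

lemma entropy_convex_hull_le_Max:
  fixes E :: "(real^'y::finite) set"
  assumes "finite E" and "\<forall>q\<in>E. prob_vec q" and "p \<in> convex hull E"
  shows "entropy p \<le> Max (entropy ` E) + log 2 (card E)"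
proof -
  obtain u where u: "\<forall>x\<in>E. 0 \<le> u x" "sum u E = 1" "p = (\<Sum>x\<in>E. u x *\<^sub>R x)"
    using assms(1,3) by (auto simp: convex_hull_finite)
  have "entropy p \<le> (\<Sum>x\<in>E. u x * entropy x) + log 2 (card E)"
    using entropy_mixture_le_log_card[of E id u] assms(1,2) u by simp
  also have "(\<Sum>x\<in>E. u x * entropy x) \<le> (\<Sum>x\<in>E. u x * Max (entropy ` E))"
    using assms(1) u(1) by (intro sum_mono mult_left_mono) auto
  also have "\<dots> = Max (entropy ` E)"
    using u(2) by (simp flip: sum_distrib_right)
  finally show ?thesis by simp
qed

lemma entropy_convex_hull_Inf_Sup:
  fixes E :: "(real^'y::finite) set"
  assumes "finite E" and "E \<noteq> {}" and "\<forall>q\<in>E. prob_vec q"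
  shows "Inf (entropy ` (convex hull E)) = Min (entropy ` E)"
    and "Max (entropy ` E) \<le> Sup (entropy ` (convex hull E))"
    and "Sup (entropy ` (convex hull E)) \<le> Max (entropy ` E) + log 2 (card E)"
proof -
  note lower = entropy_convex_hull_ge_Min[OF assms(1,3)]
  note upper = entropy_convex_hull_le_Max[OF assms(1,3)]
  have sub: "entropy ` E \<subseteq> entropy ` (convex hull E)"
    by (intro image_mono hull_subset)
  have "Min (entropy ` E) \<in> entropy ` (convex hull E)"
    using assms(1,2) by (intro subsetD[OF sub] Min_in) auto
  then show "Inf (entropy ` (convex hull E)) = Min (entropy ` E)"
    by (rule cInf_eq_minimum) (auto intro: lower)
  have "Max (entropy ` E) \<in> entropy ` (convex hull E)"
    using assms(1,2) by (intro subsetD[OF sub] Max_in) auto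
  moreover have "bdd_above (entropy ` (convex hull E))"
    by (rule bdd_aboveI2[where M = "Max (entropy ` E) + log 2 (card E)"]) (rule upper)
  ultimately show "Max (entropy ` E) \<le> Sup (entropy ` (convex hull E))"
    by (rule cSup_upper)
  show "Sup (entropy ` (convex hull E)) \<le> Max (entropy ` E) + log 2 (card E)"
    using assms(2) by (intro cSup_least) (auto intro: upper)
qed

lemma credal_set_compact:
  assumes "credal_set P"
  shows "compact P"
proof -
  have "P \<subseteq> cbox 0 1"
  proof
    fix p assume "p \<in> P"
    then have p: "prob_vec p" using assms by (auto simp: credal_set_def)
    have "p $ y \<le> 1" for y
      using p member_le_sum[of y UNIV "\<lambda>y. p $ y"] by (auto simp: prob_vec_def)
    with p show "p \<in> cbox 0 1" by (auto simp: mem_box_cart prob_vec_def)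
  qed
  then show ?thesis
    using assms bounded_subset[OF bounded_cbox] by (auto simp: credal_set_def compact_eq_bounded_closed)
qed

lemma credal_set_eq_convex_hull_extreme_points:
  assumes "credal_set P"
  shows "P = convex hull {x. x extreme_point_of P}"
  using assms credal_set_compact Krein_Milman_Minkowski by (auto simp: credal_set_def)

lemma Sup_prob_simplex_weighted_sum:
  fixes h :: "nat \<Rightarrow> real"
  assumes "S \<ge> 1"
  shows "Sup ((\<lambda>\<beta>. \<Sum>s=1..S. \<beta> s * h s) ` prob_simplex S) = Max (h ` {1..S})"
proof (rule cSup_eq_maximum)
  have "Max (h ` {1..S}) \<in> h ` {1..S}"
    using assms by (intro Max_in) auto
  then obtain s0 where s0: "s0 \<in> {1..S}" "h s0 = Max (h ` {1..S})"
    by (metis imageE)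
  let ?\<delta> = "\<lambda>s. if s = s0 then 1 else 0 :: real"
  have "?\<delta> \<in> prob_simplex S" and "(\<Sum>s=1..S. ?\<delta> s * h s) = h s0"
    using s0(1) by (simp_all add: prob_simplex_def if_distrib[of "\<lambda>c. c * _"] cong: if_cong)
  then show "Max (h ` {1..S}) \<in> (\<lambda>\<beta>. \<Sum>s=1..S. \<beta> s * h s) ` prob_simplex S"
    using s0(2) by force
next
  fix x assume "x \<in> (\<lambda>\<beta>. \<Sum>s=1..S. \<beta> s * h s) ` prob_simplex S"
  then obtain \<beta> where \<beta>: "\<beta> \<in> prob_simplex S" and x: "x = (\<Sum>s=1..S. \<beta> s * h s)"
    by auto
  have "x \<le> (\<Sum>s=1..S. \<beta> s * Max (h ` {1..S}))"
    using \<beta> unfolding x prob_simplex_def by (intro sum_mono mult_left_mono) auto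
  also have "\<dots> = Max (h ` {1..S})"
    using \<beta> by (simp add: prob_simplex_def flip: sum_distrib_right)
  finally show "x \<le> Max (h ` {1..S})" .
qed

theorem theorem3:
  fixes P :: "(real^'y::finite) set" and Pex :: "nat \<Rightarrow> real^'y" and S :: nat
  assumes "credal_set P" and "finitely_generated P"
    and "bij_betw Pex {1..S} {x. x extreme_point_of P}"
  defines "B \<equiv> Sup ((\<lambda>\<beta>. \<Sum>s=1..S. \<beta> s * entropy (Pex s)) ` prob_simplex S)"
    and "Hlow \<equiv> Min ((\<lambda>s. entropy (Pex s)) ` {1..S})"
    and "Hup \<equiv> Max ((\<lambda>s. entropy (Pex s)) ` {1..S})"
    and "TU \<equiv> Sup (entropy ` P)"
    and "AU \<equiv> Inf (entropy ` P)"
  shows "max B Hup \<le> TU \<and> TU \<le> B + log 2 (real S)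
       \<and> AU = Hlow
       \<and> max 0 (max B Hup - Hlow) \<le> TU - AU
       \<and> TU - AU \<le> B + log 2 (real S) - Hlow"
proof -
  define E where "E = {x. x extreme_point_of P}"
  have P: "P = convex hull E"
    unfolding E_def using assms(1) by (rule credal_set_eq_convex_hull_extreme_points)
  have "Pex ` {1..S} = E"
    using assms(3) by (simp add: E_def bij_betw_def)
  then have img: "(\<lambda>s. entropy (Pex s)) ` {1..S} = entropy ` E"
    by (metis image_image)
  have fin: "finite E"
    using assms(2) by (simp add: E_def finitely_generated_def)
  have ne: "E \<noteq> {}"
    using assms(1) P by (auto simp: credal_set_def)
  have prob: "\<forall>q\<in>E. prob_vec q"
    using assms(1) by (simp add: E_def credal_set_def extreme_point_of_def)
  have card: "card E = S"
    using bij_betw_same_card[OF assms(3)] by (simp add: E_def)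
  with fin ne have "S \<ge> 1"
    by (metis One_nat_def Suc_leI card_gt_0_iff)
  then have "B = Hup"
    unfolding B_def Hup_def by (rule Sup_prob_simplex_weighted_sum)
  moreover have "Hlow \<le> Hup"
    unfolding Hlow_def Hup_def img using fin ne by (simp add: Min_le_iff Max_ge_iff)
  moreover have "AU = Hlow" "Hup \<le> TU" "TU \<le> Hup + log 2 S"
    using entropy_convex_hull_Inf_Sup[OF fin ne prob]
    unfolding AU_def TU_def Hlow_def Hup_def img P card by simp_all
  ultimately show ?thesis by linarith
qed

end
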